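(* Let $v\in\mathbb V^N$ be a component additive network game and $\rho\in\mathbb P^N$. Then $\mathbb E(v,\rho)=\sum_{h\in C(g(\rho))}\ \sum_{h'\subseteq h}\rho_h(h')\cdot v(h')$.
   Context: $N=\{1,\dots,n\}$ is a finite player set. A link is an unordered pair $ij=\{i,j\}$ of distinct players; $g_N$ is the set of all links; a network is any $g\subseteq g_N$; $\mathbb G^N$ is the set of all networks. For a network $g$, $N(g)$ is the set of players with at least one link in $g$. A component of $g$ is a nonempty subnetwork $h\subseteq g$ that is connected (any two players of $N(h)$ are joined by a path in $h$) and maximal (if $i\in N(h)$ and $ij\in g$ then $ij\in h$); $C(g)$ is the set of components of $g$ (empty for the empty network). A network formation probability distribution is $\rho\colon\mathbb G^N\to[0,1]$ with $\sum_g\rho(g)=1$; $\mathbb P^N$ is the set of these. $\mathbb G(\rho)=\{g:\rho(g)>0\}$, and the extent is $g(\rho)=\bigcup_{g\in\mathbb G(\rho)}g$. For a network $g$, the restriction $\rho_g$ is $\rho_g(h)=\sum_{h'\subseteq g_N\setminus g}\rho(h\cup h')$ if $h\subseteq g$ and $\rho_g(h)=0$ otherwise. A network game is $v\colon\mathbb G^N\to\mathbb R$ with $v(\varnothing)=0$; $\mathbb V^N$ is the set of these; $v$ is component additive if $v(g)=\sum_{h\in C(g)}v(h)$ for all $g$. The expected wealth is $\mathbb E(v,\rho)=\sum_{g\in\mathbb G^N}\rho(g)\,v(g)$. *)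

theory Defs
  imports Main "HOL-Analysis.Analysis"
begin

(* Players are 1..n (naturals); a link ij is the two-element set {i,j}; a network is a set of links. *)

definition players :: "nat \<Rightarrow> nat set" where
  "players n = {1..n}"

definition complete_net :: "nat \<Rightarrow> nat set set" where
  "complete_net n = {{i, j} | i j. i \<in> players n \<and> j \<in> players n \<and> i \<noteq> j}"

definition networks :: "nat \<Rightarrow> nat set set set" where
  "networks n = Pow (complete_net n)"

definition net_players :: "nat set set \<Rightarrow> nat set" where
  "net_players g = \<Union> g"

definition adj :: "nat set set \<Rightarrow> (nat \<times> nat) set" where
  "adj h = {(i, j). {i, j} \<in> h}"

definition connected_net :: "nat set set \<Rightarrow> bool" where
  "connected_net h \<longleftrightarrow> (\<forall>i\<in>net_players h. \<forall>j\<in>net_players h. (i, j) \<in> (adj h)\<^sup>*)"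

definition components :: "nat set set \<Rightarrow> nat set set set" where
  "components g = {h. h \<noteq> {} \<and> h \<subseteq> g \<and> connected_net h \<and>
      (\<forall>i\<in>net_players h. \<forall>l\<in>g. i \<in> l \<longrightarrow> l \<in> h)}"

definition is_prob_dist :: "nat \<Rightarrow> (nat set set \<Rightarrow> real) \<Rightarrow> bool" where
  "is_prob_dist n \<rho> \<longleftrightarrow> (\<forall>g\<in>networks n. 0 \<le> \<rho> g \<and> \<rho> g \<le> 1) \<and> (\<Sum>g\<in>networks n. \<rho> g) = 1"

definition support :: "nat \<Rightarrow> (nat set set \<Rightarrow> real) \<Rightarrow> nat set set set" where
  "support n \<rho> = {g \<in> networks n. \<rho> g > 0}"

definition extent :: "nat \<Rightarrow> (nat set set \<Rightarrow> real) \<Rightarrow> nat set set" where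
  "extent n \<rho> = \<Union> (support n \<rho>)"

definition restrict_dist :: "nat \<Rightarrow> (nat set set \<Rightarrow> real) \<Rightarrow> nat set set \<Rightarrow> nat set set \<Rightarrow> real" where
  "restrict_dist n \<rho> g h =
     (if h \<subseteq> g then (\<Sum>h'\<in>Pow (complete_net n - g). \<rho> (h \<union> h')) else 0)"

definition is_network_game :: "nat \<Rightarrow> (nat set set \<Rightarrow> real) \<Rightarrow> bool" where
  "is_network_game n v \<longleftrightarrow> v {} = 0"

definition component_additive :: "nat \<Rightarrow> (nat set set \<Rightarrow> real) \<Rightarrow> bool" where
  "component_additive n v \<longleftrightarrow> (\<forall>g\<in>networks n. v g = (\<Sum>h\<in>components g. v h))"

definition expected_wealth :: "nat \<Rightarrow> (nat set set \<Rightarrow> real) \<Rightarrow> (nat set set \<Rightarrow> real) \<Rightarrow> real" where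
  "expected_wealth n v \<rho> = (\<Sum>g\<in>networks n. \<rho> g * v g)"

end

theory Submission
  imports Defs
begin

(* If \<rho>(g) > 0 then g lies inside the extent E, so every component of g lies in exactly one
   component H of E, and g \<inter> H is the union of the components of g inside H. Component
   additivity therefore splits v(g) as the sum of v(g \<inter> H) over the components H of E.
   Exchanging the sums and grouping the networks g by their trace h' = g \<inter> H, the weight
   collected by h' is exactly the marginal \<rho>\<^sub>H(h'). *)

lemma sym_rtrancl_adj: "sym ((adj h)\<^sup>*)"
proof -
  have "sym (adj h)" unfolding adj_def sym_def by (auto simp: insert_commute)
  then show ?thesis by (rule sym_rtrancl)
qed

lemma rtrancl_adj_mono: "h \<subseteq> g \<Longrightarrow> (adj h)\<^sup>* \<subseteq> (adj g)\<^sup>*"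
  unfolding adj_def by (rule rtrancl_mono) auto

lemma complete_net_link: "l \<in> complete_net n \<Longrightarrow> \<exists>x y. l = {x, y} \<and> x \<noteq> y"
  unfolding complete_net_def by blast

lemma finite_complete_net: "finite (complete_net n)"
proof (rule finite_subset)
  show "complete_net n \<subseteq> Pow (players n)" unfolding complete_net_def by auto
qed (simp add: players_def)

lemma finite_components: "finite g \<Longrightarrow> finite (components g)"
  by (rule finite_subset[of _ "Pow g"]) (auto simp: components_def)

lemma component_reach_closed:
  assumes "H \<in> components E" "i \<in> net_players H" "(i, j) \<in> (adj E)\<^sup>*"
  shows "j \<in> net_players H"
  using assms(3)
proof (induction rule: rtrancl_induct)
  case base
  show ?case using assms(2) .
next
  case (step x y)
  then have "{x, y} \<in> H" using assms(1) by (auto simp: adj_def components_def)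
  then show ?case by (auto simp: net_players_def)
qed

definition component_of :: "nat set set \<Rightarrow> nat \<Rightarrow> nat set set" where
  "component_of E i = {l \<in> E. \<exists>j\<in>l. (i, j) \<in> (adj E)\<^sup>*}"

lemma net_players_component_of:
  assumes "E \<subseteq> complete_net n" "j \<in> net_players (component_of E i)"
  shows "(i, j) \<in> (adj E)\<^sup>*"
proof -
  obtain l k where l: "l \<in> E" "j \<in> l" "k \<in> l" "(i, k) \<in> (adj E)\<^sup>*"
    using assms(2) by (auto simp: net_players_def component_of_def)
  show ?thesis
  proof (cases "j = k")
    case False
    \<comment> \<open>links have exactly two endpoints, so l is the link kj\<close>
    with l assms(1) have "l = {k, j}" using complete_net_link by blast
    with l show ?thesis by (auto simp: adj_def intro: rtrancl_into_rtrancl)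
  qed (use l in simp)
qed

lemma rtrancl_adj_component_of:
  "(i, j) \<in> (adj E)\<^sup>* \<Longrightarrow> (i, j) \<in> (adj (component_of E i))\<^sup>*"
proof (induction rule: rtrancl_induct)
  case (step x y)
  then have "{x, y} \<in> component_of E i" by (auto simp: adj_def component_of_def)
  then have "(x, y) \<in> adj (component_of E i)" by (simp add: adj_def)
  with step.IH show ?case by (rule rtrancl_into_rtrancl)
qed simp

lemma component_of_mem_components:
  assumes E: "E \<subseteq> complete_net n" and i: "i \<in> net_players E"
  shows "component_of E i \<in> components E"
  unfolding components_def
proof (intro CollectI conjI ballI impI)
  show "component_of E i \<noteq> {}" using i by (auto simp: net_players_def component_of_def)
  show "component_of E i \<subseteq> E" by (auto simp: component_of_def)
  show "connected_net (component_of E i)" unfolding connected_net_def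
  proof (intro ballI)
    fix a b assume "a \<in> net_players (component_of E i)" "b \<in> net_players (component_of E i)"
    then have "(i, a) \<in> (adj (component_of E i))\<^sup>*" "(i, b) \<in> (adj (component_of E i))\<^sup>*"
      using net_players_component_of[OF E] rtrancl_adj_component_of by blast+
    then show "(a, b) \<in> (adj (component_of E i))\<^sup>*"
      using sym_rtrancl_adj by (meson rtrancl_trans symD)
  qed
  fix j l assume "j \<in> net_players (component_of E i)" "l \<in> E" "j \<in> l"
  then show "l \<in> component_of E i"
    using net_players_component_of[OF E] by (auto simp: component_of_def)
qed

lemma connected_subset_component_of:
  assumes "connected_net C" "C \<subseteq> E" "E \<subseteq> complete_net n" "i \<in> net_players C"
  shows "C \<subseteq> component_of E i"
proof
  fix l assume l: "l \<in> C"
  then obtain j where j: "j \<in> l" using assms(2,3) complete_net_link by blast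
  with l have "j \<in> net_players C" by (auto simp: net_players_def)
  with assms(1,4) have "(i, j) \<in> (adj C)\<^sup>*" by (simp add: connected_net_def)
  with assms(2) have "(i, j) \<in> (adj E)\<^sup>*" using rtrancl_adj_mono by blast
  with l j assms(2) show "l \<in> component_of E i" by (auto simp: component_of_def)
qed

lemma component_eq_component_of:
  assumes H: "H \<in> components E" and E: "E \<subseteq> complete_net n" and i: "i \<in> net_players H"
  shows "H = component_of E i"
proof
  show "H \<subseteq> component_of E i"
    using H E i by (intro connected_subset_component_of) (auto simp: components_def)
  show "component_of E i \<subseteq> H"
  proof
    fix l assume "l \<in> component_of E i"
    then obtain j where "l \<in> E" "j \<in> l" "(i, j) \<in> (adj E)\<^sup>*" by (auto simp: component_of_def)
    moreover from this have "j \<in> net_players H" using component_reach_closed H i by blast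
    ultimately show "l \<in> H" using H by (auto simp: components_def)
  qed
qed

lemma ex1_component_containing:
  assumes "C \<noteq> {}" "connected_net C" "C \<subseteq> E" "E \<subseteq> complete_net n"
  shows "\<exists>!H. H \<in> components E \<and> C \<subseteq> H"
proof -
  obtain l where l: "l \<in> C" using assms(1) by blast
  then obtain i where "i \<in> l" using assms(3,4) complete_net_link by blast
  with l have i: "i \<in> net_players C" by (auto simp: net_players_def)
  then have "i \<in> net_players E" using assms(3) by (auto simp: net_players_def)
  then have "component_of E i \<in> components E \<and> C \<subseteq> component_of E i"
    using assms i component_of_mem_components connected_subset_component_of by blast
  moreover have "H = component_of E i" if "H \<in> components E \<and> C \<subseteq> H" for H
  proof -
    from that i have "i \<in> net_players H" by (auto simp: net_players_def)
    with that assms(4) show ?thesis using component_eq_component_of by blast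
  qed
  ultimately show ?thesis by blast
qed

lemma components_Int_component:
  assumes H: "H \<in> components E" and "g \<subseteq> E"
  shows "components (g \<inter> H) = {C \<in> components g. C \<subseteq> H}"
proof (intro equalityI subsetI)
  fix C assume C: "C \<in> components (g \<inter> H)"
  have "l \<in> C" if i: "i \<in> net_players C" and l: "l \<in> g" "i \<in> l" for i l
  proof -
    have "i \<in> net_players H" using i C by (auto simp: components_def net_players_def)
    then have "l \<in> H" using H l \<open>g \<subseteq> E\<close> by (auto simp: components_def)
    then show "l \<in> C" using C i l by (auto simp: components_def)
  qed
  with C show "C \<in> {C \<in> components g. C \<subseteq> H}" by (auto simp: components_def)
qed (auto simp: components_def)

lemma component_additive_split:
  assumes v: "component_additive n v" and gE: "g \<subseteq> E" and E: "E \<subseteq> complete_net n"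
  shows "v g = (\<Sum>H\<in>components E. v (g \<inter> H))"
proof -
  have "finite E" using E finite_complete_net finite_subset by blast
  with gE have fin: "finite (components E)" "finite (components g)"
    using finite_components finite_subset by blast+
  have "(\<Sum>H\<in>components E. v (g \<inter> H)) = (\<Sum>H\<in>components E. \<Sum>C | C \<in> components g \<and> C \<subseteq> H. v C)"
  proof (rule sum.cong[OF refl])
    fix H assume H: "H \<in> components E"
    have "g \<inter> H \<in> networks n" using gE E by (auto simp: networks_def)
    with v H gE show "v (g \<inter> H) = (\<Sum>C | C \<in> components g \<and> C \<subseteq> H. v C)"
      by (simp add: component_additive_def components_Int_component)
  qed
  also have "\<dots> = (\<Sum>C\<in>components g. \<Sum>H | H \<in> components E \<and> C \<subseteq> H. v C)"
    by (rule sum.swap_restrict[OF fin])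
  also have "\<dots> = (\<Sum>C\<in>components g. v C)"
  proof (rule sum.cong[OF refl])
    fix C assume "C \<in> components g"
    then have "\<exists>!H. H \<in> components E \<and> C \<subseteq> H"
      using gE E by (intro ex1_component_containing) (auto simp: components_def)
    then obtain H0 where "{H. H \<in> components E \<and> C \<subseteq> H} = {H0}" by blast
    then show "(\<Sum>H | H \<in> components E \<and> C \<subseteq> H. v C) = v C" by simp
  qed
  also have "\<dots> = v g"
    using v gE E by (auto simp: component_additive_def networks_def)
  finally show ?thesis by simp
qed

lemma sum_networks_Int_eq_restrict_dist:
  assumes "H \<subseteq> complete_net n"
  shows "(\<Sum>g\<in>networks n. \<rho> g * f (g \<inter> H)) = (\<Sum>h\<in>Pow H. restrict_dist n \<rho> H h * f h)"
proof -
  have "(\<Sum>g\<in>networks n. \<rho> g * f (g \<inter> H)) =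
      (\<Sum>(h, h')\<in>Pow H \<times> Pow (complete_net n - H). \<rho> (h \<union> h') * f h)"
    unfolding networks_def
    by (rule sum.reindex_bij_witness[where j = "\<lambda>g. (g \<inter> H, g - H)" and i = "\<lambda>(h, h'). h \<union> h'"])
      (use assms in \<open>auto simp: Int_Diff_Un\<close>)
  also have "\<dots> = (\<Sum>h\<in>Pow H. \<Sum>h'\<in>Pow (complete_net n - H). \<rho> (h \<union> h') * f h)"
    by (rule sum.cartesian_product[symmetric])
  also have "\<dots> = (\<Sum>h\<in>Pow H. restrict_dist n \<rho> H h * f h)"
    by (simp add: restrict_dist_def sum_distrib_right)
  finally show ?thesis .
qed

lemma extent_subset_complete_net: "extent n \<rho> \<subseteq> complete_net n"
  by (auto simp: extent_def support_def networks_def)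

lemma subset_extent_if_nonzero:
  assumes "is_prob_dist n \<rho>" "g \<in> networks n" "\<rho> g \<noteq> 0"
  shows "g \<subseteq> extent n \<rho>"
proof -
  have "\<rho> g > 0" using assms by (force simp: is_prob_dist_def)
  with assms(2) show ?thesis by (auto simp: extent_def support_def)
qed

theorem proposition2:
  fixes n :: nat and v \<rho> :: "nat set set \<Rightarrow> real"
  assumes "is_network_game n v"
    and "component_additive n v"
    and "is_prob_dist n \<rho>"
  shows "expected_wealth n v \<rho> =
    (\<Sum>h\<in>components (extent n \<rho>). \<Sum>h'\<in>Pow h. restrict_dist n \<rho> h h' * v h')"
proof -
  let ?C = "components (extent n \<rho>)"
  have "\<rho> g * v g = (\<Sum>H\<in>?C. \<rho> g * v (g \<inter> H))" if "g \<in> networks n" for g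
  proof (cases "\<rho> g = 0")
    case False
    with assms(3) that have "g \<subseteq> extent n \<rho>" by (rule subset_extent_if_nonzero)
    with assms(2) show ?thesis
      by (simp add: component_additive_split[OF _ _ extent_subset_complete_net] sum_distrib_left)
  qed simp
  then have "expected_wealth n v \<rho> = (\<Sum>g\<in>networks n. \<Sum>H\<in>?C. \<rho> g * v (g \<inter> H))"
    by (simp add: expected_wealth_def)
  also have "\<dots> = (\<Sum>H\<in>?C. \<Sum>g\<in>networks n. \<rho> g * v (g \<inter> H))"
    by (rule sum.swap)
  also have "\<dots> = (\<Sum>H\<in>?C. \<Sum>h'\<in>Pow H. restrict_dist n \<rho> H h' * v h')"
    using extent_subset_complete_net
    by (intro sum.cong refl sum_networks_Int_eq_restrict_dist) (auto simp: components_def)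
  finally show ?thesis .
qed

end
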